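(* Let $\psi_1=\tfrac{1}{\sqrt2}(|0\rangle|0\rangle+|1\rangle|1\rangle)\in\mathbb{C}^2\otimes\mathbb{C}^2$, and for unitaries $U,V$ on $\mathbb{C}^2$ let $P_{U,V}$ be the orthogonal projector onto $\mathbb{C}(U\otimes V)\psi_1$. Then $E_{\mathrm{HS}}(P_{U,V})=1/3$, and for every state $\sigma$ on $\mathbb{C}^2\otimes\mathbb{C}^2$ one has $E_{\mathrm{HS}}(\sigma)\le 1/3$; i.e. these Bell states are maximally entangled with respect to the Hilbert–Schmidt entanglement.
   Context: $\mathcal T$ denotes the set of states (positive operators of trace one) on $\mathbb{C}^2\otimes\mathbb{C}^2$. The set of disentangled states is $\mathcal D=\{\rho\in\mathcal T:\rho=\sum_k p_k\rho^{(1)}_k\otimes\rho^{(2)}_k,\ p_k\ge0,\ \sum_k p_k=1,\ \rho^{(1)}_k,\rho^{(2)}_k \text{ states on }\mathbb{C}^2\}$. The Hilbert–Schmidt norm is $\|A\|_{\mathrm{HS}}^2=\mathrm{tr}(A^*A)$, and the Hilbert–Schmidt entanglement of a state $\sigma$ is $E_{\mathrm{HS}}(\sigma)=\min_{\rho\in\mathcal D}\|\rho-\sigma\|_{\mathrm{HS}}^2$. *)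

theory Defs
  imports Complex_Main
begin

text \<open>Operators on a finite-dimensional Hilbert space with orthonormal basis indexed
  by a finite type 'i are represented by their matrices 'i => 'i => complex.
  C^2 has basis indexed by bool (False = |0>, True = |1>);
  C^2 (x) C^2 has basis indexed by bool \<times> bool.\<close>

type_synonym 'i cmat = "'i \<Rightarrow> 'i \<Rightarrow> complex"
type_synonym 'i cvec = "'i \<Rightarrow> complex"

definition mmult :: "('i::finite) cmat \<Rightarrow> 'i cmat \<Rightarrow> 'i cmat" where
  "mmult A B = (\<lambda>i k. \<Sum>j\<in>UNIV. A i j * B j k)"

definition mvmult :: "('i::finite) cmat \<Rightarrow> 'i cvec \<Rightarrow> 'i cvec" where
  "mvmult A v = (\<lambda>i. \<Sum>j\<in>UNIV. A i j * v j)"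

definition adjoint :: "'i cmat \<Rightarrow> 'i cmat" where
  "adjoint A = (\<lambda>i j. cnj (A j i))"

definition id_mat :: "'i cmat" where
  "id_mat = (\<lambda>i j. if i = j then 1 else 0)"

definition mtrace :: "('i::finite) cmat \<Rightarrow> complex" where
  "mtrace A = (\<Sum>i\<in>UNIV. A i i)"

definition cinner :: "('i::finite) cvec \<Rightarrow> 'i cvec \<Rightarrow> complex" where
  "cinner v w = (\<Sum>i\<in>UNIV. cnj (v i) * w i)"

definition positive_op :: "('i::finite) cmat \<Rightarrow> bool" where
  "positive_op A \<longleftrightarrow> (\<forall>v. Im (cinner v (mvmult A v)) = 0 \<and> Re (cinner v (mvmult A v)) \<ge> 0)"

definition is_state :: "('i::finite) cmat \<Rightarrow> bool" where
  "is_state A \<longleftrightarrow> positive_op A \<and> mtrace A = 1"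

definition unitary :: "('i::finite) cmat \<Rightarrow> bool" where
  "unitary U \<longleftrightarrow> mmult (adjoint U) U = id_mat \<and> mmult U (adjoint U) = id_mat"

definition kron :: "'a cmat \<Rightarrow> 'b cmat \<Rightarrow> ('a \<times> 'b) cmat" where
  "kron A B = (\<lambda>(i, j) (k, l). A i k * B j l)"

definition disentangled :: "(bool \<times> bool) cmat \<Rightarrow> bool" where
  "disentangled \<rho> \<longleftrightarrow> is_state \<rho> \<and>
     (\<exists>(n::nat) (p::nat \<Rightarrow> real) (r1::nat \<Rightarrow> bool cmat) (r2::nat \<Rightarrow> bool cmat).
        (\<forall>k<n. p k \<ge> 0 \<and> is_state (r1 k) \<and> is_state (r2 k)) \<and>
        (\<Sum>k<n. p k) = 1 \<and>
        \<rho> = (\<lambda>x y. \<Sum>k<n. complex_of_real (p k) * kron (r1 k) (r2 k) x y))"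

definition hs_norm_sq :: "('i::finite) cmat \<Rightarrow> real" where
  "hs_norm_sq A = Re (mtrace (mmult (adjoint A) A))"

text \<open>Hilbert-Schmidt entanglement: the minimum (here: infimum; it is attained since
  the set of disentangled states is compact) of ||rho - sigma||^2 over disentangled rho.\<close>
definition E_HS :: "(bool \<times> bool) cmat \<Rightarrow> real" where
  "E_HS \<sigma> = Inf {hs_norm_sq (\<lambda>i j. \<rho> i j - \<sigma> i j) | \<rho>. disentangled \<rho>}"

definition psi1 :: "(bool \<times> bool) cvec" where
  "psi1 = (\<lambda>(i, j). if i = j then complex_of_real (1 / sqrt 2) else 0)"

definition proj_line :: "('i::finite) cvec \<Rightarrow> 'i cmat" where
  "proj_line \<phi> = (\<lambda>i j. \<phi> i * cnj (\<phi> j) / cinner \<phi> \<phi>)"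

definition bell_proj :: "bool cmat \<Rightarrow> bool cmat \<Rightarrow> (bool \<times> bool) cmat" where
  "bell_proj U V = proj_line (mvmult (kron U V) psi1)"

end

(*
  A separable state has overlap at most 1/2 with a maximally entangled vector
  phi = (U (x) V) psi1: for a product state s1 (x) s2 the overlap is tr (s1 s2^T) / 2, which is
  at most 1/2 by Cauchy-Schwarz and tr s^2 <= 1.  Hence with P = phi phi^* the witness
  W = P - 1/4 satisfies <rho - P, W> <= -1/2 for every separable rho, and Cauchy-Schwarz with
  ||W||^2 = 3/4 gives ||rho - P||^2 >= 1/3.

  Conversely, for every state sigma the state sigma/3 + 1/6 is separable, and its squared distance
  to sigma is (4 tr sigma^2 - 1)/9 <= 1/3.  A Cholesky decomposition sigma = sum psi psi^* reduces
  separability to pure psi.  There the Schmidt decomposition psi = a u(x)v + c u'(x)v' writes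
  psi psi^*/3 + |psi|^2/6 as a nonnegative combination of product projectors; the coherence
  between u(x)v and u'(x)v' is produced by averaging over four phase-rotated product vectors.
*)

theory Submission
  imports Defs "HOL-Library.Cardinality"
begin

section \<open>Matrices, vectors and Kronecker products\<close>

lemma sum_UNIV_bool: "(\<Sum>x\<in>UNIV. f x) = f False + f True"
  by (simp add: UNIV_bool)

lemma sum_UNIV_prod:
  "(\<Sum>x\<in>(UNIV::('a::finite \<times> 'b::finite) set). f x) = (\<Sum>a\<in>UNIV. \<Sum>b\<in>UNIV. f (a, b))"
  by (simp add: sum.cartesian_product)

lemma sum_mult_delta_right:
  "(\<Sum>l\<in>(UNIV::'i::finite set). f l * (if l = i then s else 0)) = f i * (s::complex)"
  by (simp add: if_distrib[of "(*) _"] cong: if_cong)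

lemma sum_mult_delta_left:
  "(\<Sum>l\<in>(UNIV::'i::finite set). (if l = i then s else 0) * f l) = s * (f i::complex)"
  by (simp add: if_distrib[of "\<lambda>x. x * _"] cong: if_cong)

lemma mult_cnj_self: "z * cnj z = (of_real (cmod z))\<^sup>2"
  by (metis complex_norm_square of_real_power)

lemma cnj_mult_self: "cnj z * z = (of_real (cmod z))\<^sup>2"
  by (metis mult.commute mult_cnj_self)

definition outer :: "'i cvec \<Rightarrow> 'i cmat" where
  "outer x = (\<lambda>i j. x i * cnj (x j))"

lemma cinner_self_eq: "cinner x x = of_real (\<Sum>i\<in>UNIV. (cmod ((x::'i::finite cvec) i))\<^sup>2)"
  by (simp add: cinner_def cnj_mult_self)

lemma cinner_self_eq_0_iff: "cinner x x = 0 \<longleftrightarrow> x = (\<lambda>i. 0::complex)"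
  for x :: "'i::finite cvec"
  unfolding cinner_self_eq of_real_eq_0_iff by (simp add: sum_nonneg_eq_0_iff fun_eq_iff)

lemma cinner_self_pos:
  fixes x :: "'i::finite cvec"
  assumes "x \<noteq> (\<lambda>i. 0)"
  obtains n where "cinner x x = of_real n" and "0 < n"
proof
  define n where "n = (\<Sum>i\<in>UNIV. (cmod (x i))\<^sup>2)"
  show xx: "cinner x x = of_real n" by (simp only: n_def cinner_self_eq)
  have "n \<noteq> 0" using assms cinner_self_eq_0_iff[of x] by (simp add: xx)
  moreover have "0 \<le> n" by (simp add: n_def sum_nonneg)
  ultimately show "0 < n" by simp
qed

lemma cinner_mvmult_left: "cinner (mvmult A x) y = cinner x (mvmult (adjoint A) (y::'i::finite cvec))"
  unfolding cinner_def mvmult_def adjoint_def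
  by (simp add: sum_distrib_left sum_distrib_right) (subst sum.swap, simp add: mult_ac)

lemma mvmult_mmult: "mvmult (mmult A B) x = mvmult A (mvmult B (x::'i::finite cvec))"
  unfolding mvmult_def mmult_def
  by (simp add: fun_eq_iff sum_distrib_left sum_distrib_right) (subst sum.swap, simp add: mult_ac)

lemma mmult_assoc: "mmult (mmult A B) C = mmult A (mmult B (C::'i::finite cmat))"
  unfolding mmult_def
  by (simp add: fun_eq_iff sum_distrib_left sum_distrib_right) (subst sum.swap, simp add: mult_ac)

lemma mmult_id_mat_right: "mmult A id_mat = (A::'i::finite cmat)"
  by (simp add: mmult_def id_mat_def fun_eq_iff sum_mult_delta_right[where s = 1, simplified])

lemma mvmult_id_mat: "mvmult id_mat x = (x::'i::finite cvec)"
  by (simp add: mvmult_def id_mat_def fun_eq_iff if_distrib[of "\<lambda>z. z * _"] cong: if_cong)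

lemma mtrace_mmult_commute: "mtrace (mmult A B) = mtrace (mmult B (A::'i::finite cmat))"
  unfolding mtrace_def mmult_def by (subst sum.swap) (simp add: mult_ac)

lemma mtrace_unitary_conj:
  assumes "unitary U"
  shows "mtrace (mmult (adjoint U) (mmult A U)) = mtrace (A::'i::finite cmat)"
  using assms by (simp add: mtrace_mmult_commute[of "adjoint U"] mmult_assoc unitary_def
      mmult_id_mat_right)

lemma mmult_kron: "mmult (kron A B) (kron C D) = kron (mmult A C) (mmult B D)"
  for A C :: "'a::finite cmat" and B D :: "'b::finite cmat"
  by (simp add: fun_eq_iff mmult_def kron_def sum_UNIV_prod sum_product mult_ac)

lemma adjoint_kron: "adjoint (kron A B) = kron (adjoint A) (adjoint B)"
  by (simp add: fun_eq_iff adjoint_def kron_def)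

lemma kron_id_mat: "kron id_mat id_mat = id_mat"
  by (simp add: fun_eq_iff id_mat_def kron_def)

lemma mtrace_kron: "mtrace (kron A B) = mtrace A * mtrace B"
  for A :: "'a::finite cmat" and B :: "'b::finite cmat"
  by (simp add: mtrace_def kron_def sum_UNIV_prod sum_product)

section \<open>Positive operators\<close>

definition pair_vec :: "'i \<Rightarrow> complex \<Rightarrow> 'i \<Rightarrow> complex \<Rightarrow> 'i cvec" where
  "pair_vec i s j w = (\<lambda>k. (if k = i then s else 0) + (if k = j then w else 0))"

lemma cinner_pair_vec_mvmult:
  "cinner (pair_vec i s j w) (mvmult (A::'i::finite cmat) (pair_vec i s j w)) =
     cnj s * (A i i * s + A i j * w) + cnj w * (A j i * s + A j j * w)"
proof -
  have "cnj (pair_vec i s j w k) = (if k = i then cnj s else 0) + (if k = j then cnj w else 0)" for k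
    by (simp add: pair_vec_def)
  then show ?thesis
    by (simp add: cinner_def mvmult_def pair_vec_def distrib_left distrib_right sum.distrib
        sum_mult_delta_left sum_mult_delta_right)
qed

lemma positive_opD:
  "positive_op A \<Longrightarrow> Im (cinner v (mvmult A v)) = 0 \<and> 0 \<le> Re (cinner v (mvmult A v))"
  by (simp add: positive_op_def)

lemma positive_op_diag:
  assumes "positive_op (A::'i::finite cmat)"
  shows "Im (A i i) = 0" and "0 \<le> Re (A i i)"
proof -
  have "cinner (pair_vec i 1 i 0) (mvmult A (pair_vec i 1 i 0)) = A i i"
    by (simp add: cinner_pair_vec_mvmult)
  with positive_opD[OF assms, of "pair_vec i 1 i 0"]
  show "Im (A i i) = 0" "0 \<le> Re (A i i)" by auto
qed

lemma positive_op_hermitian: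
  assumes "positive_op (A::'i::finite cmat)"
  shows "A j i = cnj (A i j)"
proof (cases "i = j")
  case True
  then show ?thesis using positive_op_diag(1)[OF assms, of i] by (simp add: complex_eq_iff)
next
  case False
  note diag = positive_op_diag(1)[OF assms]
  have "Im (A i j) + Im (A j i) = 0"
    using positive_opD[OF assms, of "pair_vec i 1 j 1"] diag by (simp add: cinner_pair_vec_mvmult)
  moreover have "Re (A i j) - Re (A j i) = 0"
    using positive_opD[OF assms, of "pair_vec i 1 j \<i>"] diag
    by (simp add: cinner_pair_vec_mvmult algebra_simps)
  ultimately show ?thesis by (simp add: complex_eq_iff)
qed

lemma nonneg_affine_slope_zero:
  fixes r c :: real
  assumes "\<And>t. 0 \<le> 2 * t * r + c"
  shows "r = 0"
proof (rule ccontr)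
  assume "r \<noteq> 0"
  have "0 \<le> 2 * (- (\<bar>c\<bar> + 1) / (2 * r)) * r + c" by (rule assms)
  also have "2 * (- (\<bar>c\<bar> + 1) / (2 * r)) * r = - (\<bar>c\<bar> + 1)" using \<open>r \<noteq> 0\<close> by simp
  finally show False by linarith
qed

lemma positive_op_zero_diag_row:
  assumes "positive_op (A::'i::finite cmat)" and "A i i = 0"
  shows "A i j = 0"
proof (cases "i = j")
  case True
  then show ?thesis using assms(2) by simp
next
  case False
  have herm: "A j i = cnj (A i j)" by (rule positive_op_hermitian[OF assms(1)])
  have "Re (A i j) = 0"
  proof (rule nonneg_affine_slope_zero[where c = "Re (A j j)"])
    fix t :: real
    show "0 \<le> 2 * t * Re (A i j) + Re (A j j)"
      using positive_opD[OF assms(1), of "pair_vec i (of_real t) j 1"] assms(2) herm False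
      by (simp add: cinner_pair_vec_mvmult)
  qed
  moreover have "Im (A i j) = 0"
  proof (rule nonneg_affine_slope_zero[where c = "Re (A j j)"])
    fix t :: real
    show "0 \<le> 2 * t * Im (A i j) + Re (A j j)"
      using positive_opD[OF assms(1), of "pair_vec i (\<i> * of_real t) j 1"] assms(2) herm False
      by (simp add: cinner_pair_vec_mvmult)
  qed
  ultimately show ?thesis by (simp add: complex_eq_iff)
qed

(* The quadratic form of the complement at x is that of A at x - ((A x)_i / A_ii) e_i. *)
lemma positive_op_schur_complement:
  assumes pos: "positive_op (A::'i::finite cmat)" and pivot: "0 < Re (A i i)"
  defines "b \<equiv> (\<lambda>k. A k i / of_real (sqrt (Re (A i i))))"
  shows "positive_op (\<lambda>k l. A k l - outer b k l)"
  unfolding positive_op_def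
proof
  fix x :: "'i cvec"
  define a where "a = Re (A i i)"
  define g where "g = mvmult A x i"
  define c where "c = g / of_real a"
  define y where "y = (\<lambda>k. x k - (if k = i then c else 0))"
  have a: "A i i = of_real a" "0 < a"
    using positive_op_diag(1)[OF pos, of i] pivot by (simp_all add: a_def complex_eq_iff)
  have "cnj (x k) * A k i = cnj (A i k * x k)" for k
    by (subst positive_op_hermitian[OF pos]) (simp add: mult.commute)
  then have col: "(\<Sum>k\<in>UNIV. cnj (x k) * A k i) = cnj g"
    by (simp only: g_def mvmult_def cnj_sum)
  have "cinner x (mvmult (\<lambda>k l. A k l - outer b k l) x) =
      cinner x (mvmult A x) - (\<Sum>k\<in>UNIV. cnj (x k) * b k) * (\<Sum>l\<in>UNIV. cnj (b l) * x l)"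
    by (simp add: cinner_def mvmult_def outer_def right_diff_distrib left_diff_distrib
        sum_subtractf sum_distrib_left sum_product mult_ac) (rule sum.swap)
  also have "(\<Sum>k\<in>UNIV. cnj (x k) * b k) = cnj g / of_real (sqrt a)"
    using col by (simp add: b_def a_def mult.commute flip: sum_divide_distrib)
  also have "(\<Sum>l\<in>UNIV. cnj (b l) * x l) = g / of_real (sqrt a)"
    using col[THEN arg_cong[where f = cnj]]
    by (simp add: b_def a_def mult.commute flip: sum_divide_distrib)
  also have "cnj g / of_real (sqrt a) * (g / of_real (sqrt a)) = cnj g * g / of_real a"
    using a(2) by (simp flip: of_real_mult)
  also have "cinner x (mvmult A x) - cnj g * g / of_real a = cinner y (mvmult A y)"
  proof -
    have Ay: "mvmult A y = (\<lambda>k. mvmult A x k - A k i * c)"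
      by (simp add: y_def mvmult_def right_diff_distrib sum_subtractf sum_mult_delta_right)
    have "mvmult A y i = 0"
      using a by (simp add: Ay c_def g_def)
    moreover have "cinner y z = cinner x z - cnj c * z i" for z
      by (simp add: y_def cinner_def left_diff_distrib sum_subtractf if_distrib[of cnj]
          if_distrib[of "\<lambda>w. w * _"] cong: if_cong)
    moreover have "cinner x (mvmult A y) = cinner x (mvmult A x) - cnj g * c"
      using col by (simp add: Ay cinner_def right_diff_distrib sum_subtractf mult.assoc[symmetric]
          flip: sum_distrib_right)
    ultimately show ?thesis by (simp add: c_def)
  qed
  finally show "Im (cinner x (mvmult (\<lambda>k l. A k l - outer b k l) x)) = 0 \<and>
      0 \<le> Re (cinner x (mvmult (\<lambda>k l. A k l - outer b k l) x))"
    using positive_opD[OF pos, of y] by simp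
qed

lemma positive_op_entry_bound:
  assumes pos: "positive_op (A::'i::finite cmat)"
  shows "(cmod (A i j))\<^sup>2 \<le> Re (A i i) * Re (A j j)"
proof (cases "Re (A i i) = 0")
  case True
  then have "A i i = 0"
    using positive_op_diag(1)[OF pos, of i] by (simp add: complex_eq_iff)
  then have "A i j = 0" by (rule positive_op_zero_diag_row[OF pos])
  then show ?thesis using True by simp
next
  case False
  then have pivot: "0 < Re (A i i)" using positive_op_diag(2)[OF pos, of i] by simp
  define a where "a = Re (A i i)"
  have a: "0 < a" using pivot by (simp add: a_def)
  have "0 \<le> Re (A j j - outer (\<lambda>k. A k i / of_real (sqrt a)) j j)"
    using positive_op_diag(2)[OF positive_op_schur_complement[OF pos pivot], of j]
    by (simp add: a_def)
  also have "outer (\<lambda>k. A k i / of_real (sqrt a)) j j = of_real ((cmod (A j i))\<^sup>2 / a)"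
    using a by (simp add: outer_def mult_cnj_self power_divide flip: of_real_mult)
  finally have "(cmod (A j i))\<^sup>2 \<le> a * Re (A j j)"
    using a by (simp add: field_simps)
  then show ?thesis by (simp add: a_def positive_op_hermitian[OF pos, of i j])
qed

lemma positive_op_outer: "positive_op (outer (x::'i::finite cvec))"
  unfolding positive_op_def
proof
  fix v :: "'i cvec"
  have "cinner v (mvmult (outer x) v) = cinner v x * cnj (cinner v x)"
    by (simp add: cinner_def mvmult_def outer_def sum_distrib_left sum_product mult_ac)
  then show "Im (cinner v (mvmult (outer x) v)) = 0 \<and> 0 \<le> Re (cinner v (mvmult (outer x) v))"
    by (simp add: mult_cnj_self)
qed

inductive rank_one_sum :: "'i cmat \<Rightarrow> bool" where
  rank_one_sum_zero: "rank_one_sum (\<lambda>i j. 0)"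
| rank_one_sum_add: "rank_one_sum A \<Longrightarrow> rank_one_sum (\<lambda>i j. A i j + outer b i j)"

(* Cholesky elimination: subtracting the outer product of the scaled pivot column clears the
   pivot row and column and, by the Schur complement, keeps the operator positive. *)
lemma positive_op_rank_one_sum_supported:
  assumes "finite S" and "positive_op (A::'i::finite cmat)"
    and "\<And>i j. A i j \<noteq> 0 \<Longrightarrow> i \<in> S \<and> j \<in> S"
  shows "rank_one_sum A"
  using assms
proof (induction S arbitrary: A rule: finite_induct)
  case empty
  then have "A = (\<lambda>i j. 0)" by fastforce
  then show ?case by (simp add: rank_one_sum_zero)
next
  case (insert i S)
  note pos = insert.prems(1)
  show ?case
  proof (cases "Re (A i i) = 0")
    case True
    then have "A i i = 0" using positive_op_diag(1)[OF pos, of i] by (simp add: complex_eq_iff)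
    then have "A i j = 0" "A j i = 0" for j
      using positive_op_hermitian[OF pos, of i j] positive_op_zero_diag_row[OF pos] by simp_all
    then show ?thesis
      using insert.IH[OF pos] insert.prems(2) by blast
  next
    case False
    define a where "a = Re (A i i)"
    have a: "A i i = of_real a" "0 < a"
      using False positive_op_diag[OF pos, of i] by (simp_all add: a_def complex_eq_iff)
    define b where "b = (\<lambda>k. A k i / of_real (sqrt a))"
    define A' where "A' = (\<lambda>k l. A k l - outer b k l)"
    have b: "outer b k l = A k i * cnj (A l i) / of_real a" for k l
      using a(2) by (simp add: outer_def b_def flip: of_real_mult)
    have support: "A' k l = 0" if "k \<notin> S \<or> l \<notin> S" for k l
    proof (cases "k = i \<or> l = i")
      case True
      then show ?thesis using a b positive_op_hermitian[OF pos, of l i] by (auto simp: A'_def)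
    next
      case False
      then have "k \<notin> insert i S \<or> l \<notin> insert i S" using that by auto
      then have "A k l = 0" "A k i = 0 \<or> A l i = 0" using insert.prems(2) by blast+
      then show ?thesis by (auto simp: A'_def b)
    qed
    have "positive_op A'"
      unfolding A'_def b_def a_def by (rule positive_op_schur_complement[OF pos a(2)[unfolded a_def]])
    then have "rank_one_sum (\<lambda>k l. A' k l + outer b k l)"
      using insert.IH support by (blast intro: rank_one_sum_add)
    then show ?thesis by (simp add: A'_def)
  qed
qed

lemma positive_op_rank_one_sum: "positive_op (A::'i::finite cmat) \<Longrightarrow> rank_one_sum A"
  by (rule positive_op_rank_one_sum_supported[of UNIV]) auto

lemma positive_op_add:
  assumes "positive_op A" and "positive_op B"
  shows "positive_op (\<lambda>i j. A i j + (B::'i::finite cmat) i j)"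
proof -
  have "cinner v (mvmult (\<lambda>i j. A i j + B i j) v) = cinner v (mvmult A v) + cinner v (mvmult B v)"
    for v :: "'i cvec"
    by (simp add: cinner_def mvmult_def distrib_left distrib_right sum.distrib)
  then show ?thesis using assms by (simp add: positive_op_def)
qed

lemma positive_op_scale:
  assumes "0 \<le> c" and "positive_op A"
  shows "positive_op (\<lambda>i j. of_real c * (A::'i::finite cmat) i j)"
proof -
  have "cinner v (mvmult (\<lambda>i j. of_real c * A i j) v) = of_real c * cinner v (mvmult A v)"
    for v :: "'i cvec"
    by (simp add: cinner_def mvmult_def sum_distrib_left mult_ac)
  then show ?thesis using assms by (simp add: positive_op_def)
qed

lemma positive_op_id_mat: "positive_op (id_mat :: 'i::finite cmat)"
  by (simp add: positive_op_def mvmult_id_mat cinner_self_eq sum_nonneg)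

lemma positive_op_unitary_conj:
  "positive_op A \<Longrightarrow> positive_op (mmult (adjoint W) (mmult A (W::'i::finite cmat)))"
  by (simp add: positive_op_def mvmult_mmult flip: cinner_mvmult_left)

lemma is_state_unitary_conj:
  assumes "unitary U" and "is_state A"
  shows "is_state (mmult (adjoint U) (mmult A (U::'i::finite cmat)))"
  using assms by (simp add: is_state_def positive_op_unitary_conj mtrace_unitary_conj)

lemma outer_eq_scaled_proj_line: "outer x = (\<lambda>i j. cinner x x * proj_line (x::'i::finite cvec) i j)"
  by (cases "x = (\<lambda>i. 0)") (simp_all add: fun_eq_iff outer_def proj_line_def cinner_self_eq_0_iff)

lemma is_state_proj_line:
  assumes "x \<noteq> (\<lambda>i. 0)"
  shows "is_state (proj_line (x::'i::finite cvec))"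
proof -
  obtain n where xx: "cinner x x = of_real n" and "0 < n"
    using cinner_self_pos[OF assms] .
  have "positive_op (\<lambda>i j. of_real (1 / n) * outer x i j)"
    using \<open>0 < n\<close> by (intro positive_op_scale positive_op_outer) simp
  moreover have "(\<lambda>i j. of_real (1 / n) * outer x i j) = proj_line x"
    by (simp add: fun_eq_iff proj_line_def outer_def xx)
  ultimately have "positive_op (proj_line x)" by simp
  moreover have "mtrace (proj_line x) = 1"
    using \<open>0 < n\<close> xx
    by (simp add: mtrace_def proj_line_def cinner_def mult.commute flip: sum_divide_distrib)
  ultimately show ?thesis by (simp add: is_state_def)
qed

section \<open>The cone of separable operators\<close>

inductive separable_cone :: "('a::finite \<times> 'b::finite) cmat \<Rightarrow> bool" where
  separable_cone_zero: "separable_cone (\<lambda>x y. 0)"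
| separable_cone_add_kron: "separable_cone X \<Longrightarrow> 0 \<le> p \<Longrightarrow>
     is_state r1 \<Longrightarrow> is_state r2 \<Longrightarrow>
     separable_cone (\<lambda>x y. X x y + of_real p * kron r1 r2 x y)"

lemma separable_cone_add:
  assumes "separable_cone X" and "separable_cone Y"
  shows "separable_cone (\<lambda>x y. X x y + Y x y)"
  using assms(2)
proof (induction rule: separable_cone.induct)
  case separable_cone_zero
  then show ?case using assms(1) by simp
next
  case (separable_cone_add_kron Y p r1 r2)
  then have "separable_cone (\<lambda>x y. (X x y + Y x y) + of_real p * kron r1 r2 x y)"
    by (intro separable_cone.separable_cone_add_kron)
  then show ?case by (simp add: add.assoc)
qed

lemma separable_cone_sum:
  assumes "finite K" and "\<And>k. k \<in> K \<Longrightarrow> separable_cone (X k)"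
  shows "separable_cone (\<lambda>x y. \<Sum>k\<in>K. X k x y)"
  using assms by (induction K rule: finite_induct) (simp_all add: separable_cone_zero separable_cone_add)

lemma separable_cone_kron_outer:
  assumes "0 \<le> p"
  shows "separable_cone (\<lambda>x y. of_real p * kron (outer u) (outer v) x y)"
proof (cases "u = (\<lambda>i. 0) \<or> v = (\<lambda>i. 0)")
  case True
  then show ?thesis by (auto simp: outer_def kron_def separable_cone_zero split: prod.splits)
next
  case False
  obtain m n where m: "cinner u u = of_real m" "0 < m" and n: "cinner v v = of_real n" "0 < n"
    using False cinner_self_pos[of u] cinner_self_pos[of v] by metis
  have "separable_cone (\<lambda>x y. 0 + of_real (p * m * n) * kron (proj_line u) (proj_line v) x y)"
    using False assms m n
    by (intro separable_cone_add_kron separable_cone_zero is_state_proj_line) auto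
  moreover have "kron (outer u) (outer v) = (\<lambda>x y. of_real (m * n) * kron (proj_line u) (proj_line v) x y)"
    by (simp add: fun_eq_iff kron_def outer_eq_scaled_proj_line[of u] outer_eq_scaled_proj_line[of v] m n
        split: prod.splits)
  ultimately show ?thesis by (simp add: mult.assoc)
qed

lemma separable_cone_sum_repr:
  assumes "separable_cone X"
  shows "\<exists>(n::nat) p r1 r2. (\<forall>k<n. 0 \<le> p k \<and> is_state (r1 k) \<and> is_state (r2 k)) \<and>
      X = (\<lambda>x y. \<Sum>k<n. complex_of_real (p k) * kron (r1 k) (r2 k) x y)"
  using assms
proof (induction rule: separable_cone.induct)
  case separable_cone_zero
  show ?case by (rule exI[of _ 0]) simp
next
  case (separable_cone_add_kron X q s1 s2)
  then obtain n :: nat and p r1 r2 where h: "\<forall>k<n. 0 \<le> p k \<and> is_state (r1 k) \<and> is_state (r2 k)"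
    and X: "X = (\<lambda>x y. \<Sum>k<n. complex_of_real (p k) * kron (r1 k) (r2 k) x y)"
    by (elim exE conjE) (rule that, assumption+)
  have "\<forall>k<Suc n. 0 \<le> (p(n := q)) k \<and> is_state ((r1(n := s1)) k) \<and> is_state ((r2(n := s2)) k)"
    using h separable_cone_add_kron.hyps by (auto simp: less_Suc_eq)
  moreover have "(\<lambda>x y. X x y + of_real q * kron s1 s2 x y) =
      (\<lambda>x y. \<Sum>k<Suc n. of_real ((p(n := q)) k) * kron ((r1(n := s1)) k) ((r2(n := s2)) k) x y)"
    by (simp add: X fun_eq_iff)
  ultimately show ?case by blast
qed

lemma disentangled_if_separable_cone:
  assumes "separable_cone \<rho>" and "is_state \<rho>"
  shows "disentangled \<rho>"
proof -
  obtain n :: nat and p r1 r2 where h: "\<forall>k<n. 0 \<le> p k \<and> is_state (r1 k) \<and> is_state (r2 k)"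
    and \<rho>: "\<rho> = (\<lambda>x y. \<Sum>k<n. complex_of_real (p k) * kron (r1 k) (r2 k) x y)"
    using separable_cone_sum_repr[OF assms(1)] by (elim exE conjE) (rule that, assumption+)
  have "mtrace \<rho> = (\<Sum>k<n. complex_of_real (p k) * mtrace (kron (r1 k) (r2 k)))"
    unfolding \<rho> mtrace_def by (subst sum.swap) (simp add: sum_distrib_left)
  also have "\<dots> = of_real (\<Sum>k<n. p k)"
    using h by (simp add: mtrace_kron is_state_def)
  finally have "(\<Sum>k<n. p k) = 1"
    using assms(2) unfolding is_state_def by (metis of_real_eq_1_iff)
  then show ?thesis unfolding disentangled_def using assms(2) h \<rho> by blast
qed

section \<open>Schmidt decomposition of two-qubit vectors\<close>

lemma cinner_scale_left: "cinner (\<lambda>i. of_real c * x i) y = of_real c * cinner x (y::'i::finite cvec)"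
  by (simp add: cinner_def sum_distrib_left mult_ac)

lemma cinner_scale_right: "cinner x (\<lambda>i. of_real c * y i) = of_real c * cinner x (y::'i::finite cvec)"
  by (simp add: cinner_def sum_distrib_left mult_ac)

lemma exists_unit_multiple:
  assumes "x \<noteq> (\<lambda>i. 0)"
  shows "\<exists>c. cinner (\<lambda>i. of_real c * x i) (\<lambda>i. of_real c * (x::'i::finite cvec) i) = 1"
proof -
  obtain n where xx: "cinner x x = of_real n" and "0 < n"
    using cinner_self_pos[OF assms] .
  then have "cinner (\<lambda>i. of_real (1 / sqrt n) * x i) (\<lambda>i. of_real (1 / sqrt n) * x i) = 1"
    unfolding cinner_scale_left cinner_scale_right xx by (simp flip: of_real_mult)
  then show ?thesis by blast
qed

lemma complex_quadratic_has_root: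
  fixes a b c :: complex
  assumes "a \<noteq> 0"
  shows "\<exists>z. a * z\<^sup>2 + b * z + c = 0"
proof
  define s where "s = csqrt (b\<^sup>2 - 4 * a * c)"
  define z where "z = (s - b) / (2 * a)"
  have "4 * a * (a * z\<^sup>2 + b * z + c) = (2 * a * z)\<^sup>2 + 2 * b * (2 * a * z) + 4 * a * c"
    by (simp add: power2_eq_square algebra_simps)
  also have "2 * a * z = s - b" using assms by (simp add: z_def)
  also have "(s - b)\<^sup>2 + 2 * b * (s - b) + 4 * a * c = s\<^sup>2 - b\<^sup>2 + 4 * a * c"
    by (simp add: power2_eq_square algebra_simps)
  also have "\<dots> = 0" by (simp add: s_def)
  finally show "a * z\<^sup>2 + b * z + c = 0" using assms by simp
qed

definition perp :: "bool cvec \<Rightarrow> bool cvec" where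
  "perp u = (\<lambda>i. if i then cnj (u False) else - cnj (u True))"

lemma cinner_bool: "cinner (x::bool cvec) y = cnj (x False) * y False + cnj (x True) * y True"
  by (simp add: cinner_def sum_UNIV_bool)

lemma cinner_perp_left: "cinner (perp x) x = 0"
  by (simp add: perp_def cinner_bool mult.commute)

lemma perp_scale: "perp (\<lambda>i. of_real c * x i) = (\<lambda>i. of_real c * perp x i)"
  by (simp add: perp_def fun_eq_iff)

lemma perp_eq_zero_iff: "perp x = (\<lambda>i. 0) \<longleftrightarrow> x = (\<lambda>i. 0)"
  by (simp add: perp_def fun_eq_iff all_bool_eq conj_commute)

lemma perp_completeness:
  assumes "cinner u u = 1"
  shows "u i * cnj (u j) + perp u i * cnj (perp u j) = id_mat i j"
proof -
  have "cnj (u False) * u False + cnj (u True) * u True = 1" using assms by (simp add: cinner_bool)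
  then show ?thesis by (cases i; cases j) (simp_all add: perp_def id_mat_def algebra_simps)
qed

definition contract_right :: "(bool \<times> bool) cvec \<Rightarrow> bool cvec \<Rightarrow> bool cvec" where
  "contract_right \<psi> w = (\<lambda>i. \<Sum>j\<in>UNIV. \<psi> (i, j) * w j)"

lemma contract_right_scale:
  "contract_right \<psi> (\<lambda>i. of_real c * w i) = (\<lambda>i. of_real c * contract_right \<psi> w i)"
  by (simp add: contract_right_def fun_eq_iff sum_distrib_left mult_ac)

(* w diagonalises the Gram matrix of the columns of psi; for w = (cnj z, 1) the off-diagonal
   entry is a quadratic polynomial in z. *)
lemma exists_unit_gram_diagonalizing:
  "\<exists>w. cinner w w = 1 \<and> cinner (contract_right \<psi> w) (contract_right \<psi> (perp w)) = 0"
proof -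
  define col where "col = (\<lambda>j i. \<psi> (i, j))"
  define p where "p = cinner (col False) (col False)"
  define q where "q = cinner (col False) (col True)"
  define r where "r = cinner (col True) (col True)"
  have gram: "cinner (contract_right \<psi> w) (contract_right \<psi> (perp w)) =
      q * (cnj (w False))\<^sup>2 + (r - p) * cnj (w False) * cnj (w True) - cnj q * (cnj (w True))\<^sup>2"
    for w
    by (simp add: p_def q_def r_def col_def cinner_bool contract_right_def perp_def sum_UNIV_bool
        algebra_simps power2_eq_square)
  have "\<exists>w. w \<noteq> (\<lambda>i. 0) \<and> cinner (contract_right \<psi> w) (contract_right \<psi> (perp w)) = 0"
  proof (cases "q = 0")
    case True
    then show ?thesis
      by (intro exI[of _ "\<lambda>i. if i then 0 else 1"]) (auto simp: gram fun_eq_iff)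
  next
    case False
    then obtain z where "q * z\<^sup>2 + (r - p) * z - cnj q = 0"
      using complex_quadratic_has_root[of q "r - p" "- cnj q"] by auto
    then show ?thesis
      by (intro exI[of _ "\<lambda>i. if i then 1 else cnj z"]) (auto simp: gram fun_eq_iff)
  qed
  then obtain w where w: "w \<noteq> (\<lambda>i. 0)" "cinner (contract_right \<psi> w) (contract_right \<psi> (perp w)) = 0"
    by blast
  obtain c where "cinner (\<lambda>i. of_real c * w i) (\<lambda>i. of_real c * w i) = 1"
    using exists_unit_multiple[OF w(1)] by blast
  moreover have "cinner (contract_right \<psi> (\<lambda>i. of_real c * w i))
      (contract_right \<psi> (perp (\<lambda>i. of_real c * w i))) = 0"
    using w(2) by (simp only: perp_scale contract_right_scale cinner_scale_left cinner_scale_right) simp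
  ultimately show ?thesis by blast
qed

lemma exists_unit_orth_pair:
  assumes "cinner a b = (0::complex)"
  shows "\<exists>u. cinner u u = 1 \<and> cinner u b = 0 \<and> cinner (perp u) a = 0"
proof (cases "a = (\<lambda>i. 0)")
  case False
  obtain c where "cinner (\<lambda>i. of_real c * a i) (\<lambda>i. of_real c * a i) = 1"
    using exists_unit_multiple[OF False] by blast
  moreover have "cinner (\<lambda>i. of_real c * a i) b = 0" "cinner (perp (\<lambda>i. of_real c * a i)) a = 0"
    using assms by (simp_all add: cinner_scale_left perp_scale cinner_perp_left)
  ultimately show ?thesis by blast
next
  case a: True
  show ?thesis
  proof (cases "b = (\<lambda>i. 0)")
    case True
    have "cinner (\<lambda>i. if i then 0 else 1) (\<lambda>i. if i then 0 else 1) = (1::complex)"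
      by (simp add: cinner_bool)
    then show ?thesis using a True by (auto simp: cinner_def)
  next
    case False
    then have "perp b \<noteq> (\<lambda>i. 0)" by (simp add: perp_eq_zero_iff)
    then obtain c where "cinner (\<lambda>i. of_real c * perp b i) (\<lambda>i. of_real c * perp b i) = 1"
      using exists_unit_multiple by blast
    moreover have "cinner (\<lambda>i. of_real c * perp b i) b = 0"
      by (simp add: cinner_scale_left cinner_perp_left)
    moreover have "cinner (perp (\<lambda>i. of_real c * perp b i)) a = 0"
      using a by (simp add: cinner_def)
    ultimately show ?thesis by blast
  qed
qed

definition tensor_vec :: "'a cvec \<Rightarrow> 'b cvec \<Rightarrow> ('a \<times> 'b) cvec" where
  "tensor_vec x y = (\<lambda>(i, j). x i * y j)"

lemma expand_in_product_basis:
  assumes "cinner u u = 1" and "cinner v v = 1"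
  shows "\<psi> (i, j) =
      cinner (tensor_vec u v) \<psi> * u i * v j + cinner (tensor_vec u (perp v)) \<psi> * u i * perp v j +
      cinner (tensor_vec (perp u) v) \<psi> * perp u i * v j +
      cinner (tensor_vec (perp u) (perp v)) \<psi> * perp u i * perp v j"
proof -
  have "cinner (tensor_vec u v) \<psi> * u i * v j + cinner (tensor_vec u (perp v)) \<psi> * u i * perp v j +
      cinner (tensor_vec (perp u) v) \<psi> * perp u i * v j +
      cinner (tensor_vec (perp u) (perp v)) \<psi> * perp u i * perp v j =
      (\<Sum>k\<in>UNIV. \<Sum>l\<in>UNIV. (u i * cnj (u k) + perp u i * cnj (perp u k)) *
         (v j * cnj (v l) + perp v j * cnj (perp v l)) * \<psi> (k, l))"
    by (simp add: cinner_def tensor_vec_def sum_UNIV_prod sum_UNIV_bool algebra_simps)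
  also have "\<dots> = \<psi> (i, j)"
    by (simp add: perp_completeness[OF assms(1)] perp_completeness[OF assms(2)] id_mat_def
        sum_UNIV_bool)
  finally show ?thesis by simp
qed

lemma qubit_schmidt_decomposition:
  "\<exists>u v a c. cinner u u = 1 \<and> cinner v v = 1 \<and>
      \<psi> = (\<lambda>(i, j). a * u i * v j + c * perp u i * perp v j)"
proof -
  obtain w where w: "cinner w w = 1"
    and gram: "cinner (contract_right \<psi> w) (contract_right \<psi> (perp w)) = 0"
    using exists_unit_gram_diagonalizing by blast
  obtain u where u: "cinner u u = 1" and "cinner u (contract_right \<psi> (perp w)) = 0"
    and "cinner (perp u) (contract_right \<psi> w) = 0"
    using exists_unit_orth_pair[OF gram] by blast
  define v where "v = (\<lambda>i. cnj (w i))"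
  have v: "cinner v v = 1" using w by (simp add: v_def cinner_bool mult.commute)
  have "cinner (tensor_vec u (perp v)) \<psi> = cinner u (contract_right \<psi> (perp w))"
    "cinner (tensor_vec (perp u) v) \<psi> = cinner (perp u) (contract_right \<psi> w)"
    by (simp_all add: v_def perp_def cinner_bool tensor_vec_def contract_right_def sum_UNIV_prod
        sum_UNIV_bool cinner_def algebra_simps)
  then have "\<psi> = (\<lambda>(i, j). cinner (tensor_vec u v) \<psi> * u i * v j +
      cinner (tensor_vec (perp u) (perp v)) \<psi> * perp u i * perp v j)"
    using expand_in_product_basis[OF u v, of \<psi>] \<open>cinner u _ = 0\<close> \<open>cinner (perp u) _ = 0\<close>
    by (auto simp: fun_eq_iff)
  then show ?thesis using u v by blast
qed

section \<open>Separability of \<open>\<sigma>/3 + 1/6\<close>\<close>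

(* Averaging over the fourth roots of unity cancels every cross term except the coherence
   between u (x) v and u' (x) v'. *)
lemma sum_phase_rotated_products:
  assumes "\<tau> * cnj \<tau> = 1"
  shows "(\<Sum>k<4. kron (outer (\<lambda>i. u i + \<i> ^ k * u' i))
                     (outer (\<lambda>j. v j + cnj (\<i> ^ k * \<tau>) * v' j))
            (i1, i2) (j1, j2)) =
    4 * ((u i1 * cnj (u j1) + u' i1 * cnj (u' j1)) * (v i2 * cnj (v j2) + v' i2 * cnj (v' j2)) +
         \<tau> * (u i1 * v i2 * cnj (u' j1 * v' j2)) + cnj \<tau> * (u' i1 * v' i2 * cnj (u j1 * v j2)))"
  using assms
  by (simp add: kron_def outer_def numeral_eq_Suc lessThan_Suc power_Suc) (use i_squared in algebra)

lemma is_state_maximally_mixed: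
  "is_state (\<lambda>i j. of_real (1 / real CARD('i)) * (id_mat :: 'i::finite cmat) i j)"
proof -
  have "positive_op (\<lambda>i j. of_real (1 / real CARD('i)) * (id_mat :: 'i cmat) i j)"
    by (rule positive_op_scale) (simp_all add: positive_op_id_mat)
  then show ?thesis by (simp add: is_state_def mtrace_def id_mat_def)
qed

lemma cinner_schmidt_form:
  "cinner (\<lambda>(i, j). a * u i * v j + c * perp u i * perp v j)
          (\<lambda>(i, j). a * u i * v j + c * perp u i * perp v j) =
   (a * cnj a + c * cnj c) * cinner u u * cinner v v"
  by (simp add: cinner_def sum_UNIV_prod sum_UNIV_bool perp_def algebra_simps)

lemma complex_polar_unit: "\<exists>\<tau>. \<tau> * cnj \<tau> = 1 \<and> of_real (cmod z) * \<tau> = z"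
proof (cases "z = 0")
  case False
  then show ?thesis
    by (intro exI[of _ "z / of_real (cmod z)"]) (simp add: mult_cnj_self norm_divide power2_eq_square)
qed (intro exI[of _ 1], simp)

lemma schmidt_mixture_decomposition:
  fixes u v :: "bool cvec" and \<psi> :: "(bool \<times> bool) cvec"
  assumes u: "cinner u u = 1" and v: "cinner v v = 1"
    and \<psi>: "\<psi> = (\<lambda>(i, j). a * u i * v j + c * perp u i * perp v j)"
    and \<tau>: "\<tau> * cnj \<tau> = 1" and t: "of_real (cmod (a * cnj c)) * \<tau> = a * cnj c"
  shows "outer \<psi> r s / 3 + cinner \<psi> \<psi> * id_mat r s / 6 =
    of_real ((cmod a)\<^sup>2 / 3) * kron (outer u) (outer v) r s +
    of_real ((cmod c)\<^sup>2 / 3) * kron (outer (perp u)) (outer (perp v)) r s +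
    (\<Sum>k<4. of_real (cmod (a * cnj c) / 12) *
       kron (outer (\<lambda>i. u i + \<i> ^ k * perp u i))
         (outer (\<lambda>j. v j + cnj (\<i> ^ k * \<tau>) * perp v j)) r s) +
    of_real (((cmod a)\<^sup>2 + (cmod c)\<^sup>2) / 6 - cmod (a * cnj c) / 3) * id_mat r s"
proof -
  define T :: complex where "T = of_real (cmod (a * cnj c))"
  obtain i1 i2 j1 j2 where rs: "r = (i1, i2)" "s = (j1, j2)" by fastforce
  have id: "id_mat r s = (u i1 * cnj (u j1) + perp u i1 * cnj (perp u j1)) *
      (v i2 * cnj (v j2) + perp v i2 * cnj (perp v j2))"
    by (simp add: rs perp_completeness[OF u] perp_completeness[OF v] id_mat_def)
  have "(\<Sum>k<4. kron (outer (\<lambda>i. u i + \<i> ^ k * perp u i))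
      (outer (\<lambda>j. v j + cnj (\<i> ^ k * \<tau>) * perp v j)) r s) =
      4 * (id_mat r s + \<tau> * (u i1 * v i2 * cnj (perp u j1 * perp v j2)) +
        cnj \<tau> * (perp u i1 * perp v i2 * cnj (u j1 * v j2)))"
    unfolding id unfolding rs by (rule sum_phase_rotated_products[OF \<tau>])
  then have phases: "(\<Sum>k<4. of_real (cmod (a * cnj c) / 12) * kron (outer (\<lambda>i. u i + \<i> ^ k * perp u i))
      (outer (\<lambda>j. v j + cnj (\<i> ^ k * \<tau>) * perp v j)) r s) =
      T / 3 * (id_mat r s + \<tau> * (u i1 * v i2 * cnj (perp u j1 * perp v j2)) +
        cnj \<tau> * (perp u i1 * perp v i2 * cnj (u j1 * v j2)))"
    by (simp only: sum_distrib_left[symmetric]) (simp add: T_def)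
  have products: "kron (outer u) (outer v) r s = u i1 * v i2 * cnj (u j1 * v j2)"
    "kron (outer (perp u)) (outer (perp v)) r s = perp u i1 * perp v i2 * cnj (perp u j1 * perp v j2)"
    by (simp_all add: rs kron_def outer_def)
  have o\<psi>: "outer \<psi> r s = (a * (u i1 * v i2) + c * (perp u i1 * perp v i2)) *
      (cnj a * cnj (u j1 * v j2) + cnj c * cnj (perp u j1 * perp v j2))"
    by (simp add: \<psi> rs outer_def algebra_simps)
  have n\<psi>: "cinner \<psi> \<psi> = a * cnj a + c * cnj c"
    by (simp add: \<psi> cinner_schmidt_form u v)
  have weights: "of_real ((cmod a)\<^sup>2 / 3) = a * cnj a / 3" "of_real ((cmod c)\<^sup>2 / 3) = c * cnj c / 3"
    "of_real (((cmod a)\<^sup>2 + (cmod c)\<^sup>2) / 6 - cmod (a * cnj c) / 3) = (a * cnj a + c * cnj c) / 6 - T / 3"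
    by (simp_all add: T_def mult_cnj_self)
  have "T * \<tau> = a * cnj c" using t by (simp add: T_def)
  moreover have "T * cnj \<tau> = cnj a * c" using arg_cong[OF t, of cnj] by (simp add: T_def)
  moreover have "(a * E + c * F) * (a' * E' + c' * F') / 3 + (a * a' + c * c') * \<delta> / 6 =
      a * a' / 3 * (E * E') + c * c' / 3 * (F * F') + T / 3 * (\<delta> + \<tau> * (E * F') + \<tau>' * (F * E')) +
      ((a * a' + c * c') / 6 - T / 3) * \<delta>"
    if "T * \<tau> = a * c'" and "T * \<tau>' = a' * c" for E E' F F' \<tau>' a' c' \<delta>
    using that by (simp add: field_simps)
  ultimately show ?thesis
    unfolding phases products o\<psi> n\<psi> weights by blast
qed

lemma separable_cone_pure_mixture:
  fixes \<psi> :: "(bool \<times> bool) cvec"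
  shows "separable_cone (\<lambda>x y. outer \<psi> x y / 3 + cinner \<psi> \<psi> * id_mat x y / 6)"
proof -
  obtain u v a c where u: "cinner u u = 1" and v: "cinner v v = 1"
    and \<psi>: "\<psi> = (\<lambda>(i, j). a * u i * v j + c * perp u i * perp v j)"
    using qubit_schmidt_decomposition by blast
  obtain \<tau> where \<tau>: "\<tau> * cnj \<tau> = 1" and t: "of_real (cmod (a * cnj c)) * \<tau> = a * cnj c"
    using complex_polar_unit by blast
  define M :: "bool cmat" where "M = (\<lambda>i j. of_real (1 / real CARD(bool)) * id_mat i j)"
  define w where "w = ((cmod a)\<^sup>2 + (cmod c)\<^sup>2) / 6 - cmod (a * cnj c) / 3"
  have M: "of_real (w * 4) * kron M M r s = of_real w * id_mat r s" for r s
    by (simp add: M_def kron_def id_mat_def split: prod.splits)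
  have "0 \<le> w"
    using sum_squares_bound[of "cmod a" "cmod c"] by (simp add: w_def norm_mult)
  then have "separable_cone (\<lambda>r s. of_real ((cmod a)\<^sup>2 / 3) * kron (outer u) (outer v) r s +
      of_real ((cmod c)\<^sup>2 / 3) * kron (outer (perp u)) (outer (perp v)) r s +
      (\<Sum>k<4. of_real (cmod (a * cnj c) / 12) * kron (outer (\<lambda>i. u i + \<i> ^ k * perp u i))
         (outer (\<lambda>j. v j + cnj (\<i> ^ k * \<tau>) * perp v j)) r s) +
      of_real (w * 4) * kron M M r s)"
    using is_state_maximally_mixed[where 'i = bool, folded M_def]
    by (intro separable_cone_add separable_cone_kron_outer separable_cone_sum
        separable_cone_add_kron[OF separable_cone_zero, simplified]) simp_all
  then show ?thesis
    unfolding M unfolding w_def by (simp only: schmidt_mixture_decomposition[OF u v \<psi> \<tau> t])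
qed

lemma separable_cone_rank_one_sum_mixture:
  "rank_one_sum (A::(bool \<times> bool) cmat) \<Longrightarrow>
    separable_cone (\<lambda>x y. A x y / 3 + mtrace A * id_mat x y / 6)"
proof (induction rule: rank_one_sum.induct)
  case rank_one_sum_zero
  then show ?case by (simp add: mtrace_def separable_cone_zero)
next
  case (rank_one_sum_add A b)
  have "mtrace (\<lambda>i j. A i j + outer b i j) = mtrace A + cinner b b"
    by (simp add: mtrace_def cinner_def outer_def sum.distrib mult.commute)
  then have "(\<lambda>x y. (A x y + outer b x y) / 3 + mtrace (\<lambda>i j. A i j + outer b i j) * id_mat x y / 6) =
      (\<lambda>x y. (A x y / 3 + mtrace A * id_mat x y / 6) + (outer b x y / 3 + cinner b b * id_mat x y / 6))"
    by (simp add: fun_eq_iff algebra_simps add_divide_distrib)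
  then show ?case
    using separable_cone_add[OF rank_one_sum_add.IH separable_cone_pure_mixture] by simp
qed

lemma disentangled_state_mixture:
  assumes "is_state (\<sigma>::(bool \<times> bool) cmat)"
  shows "disentangled (\<lambda>x y. \<sigma> x y / 3 + id_mat x y / 6)"
proof (rule disentangled_if_separable_cone)
  have pos: "positive_op \<sigma>" and tr: "mtrace \<sigma> = 1" using assms by (simp_all add: is_state_def)
  show "separable_cone (\<lambda>x y. \<sigma> x y / 3 + id_mat x y / 6)"
    using separable_cone_rank_one_sum_mixture[OF positive_op_rank_one_sum[OF pos]] tr by simp
  have "positive_op (\<lambda>x y. of_real (1/3) * \<sigma> x y + of_real (1/6) * id_mat x y)"
    by (intro positive_op_add positive_op_scale pos positive_op_id_mat) simp_all
  moreover have "mtrace (\<lambda>x y. \<sigma> x y / 3 + id_mat x y / 6) = 1"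
    using tr by (simp add: mtrace_def sum.distrib id_mat_def flip: sum_divide_distrib)
  ultimately show "is_state (\<lambda>x y. \<sigma> x y / 3 + id_mat x y / 6)"
    by (simp add: is_state_def)
qed

section \<open>Hilbert-Schmidt geometry\<close>

definition hs_inner :: "'i::finite cmat \<Rightarrow> 'i cmat \<Rightarrow> real" where
  "hs_inner A B = Re (mtrace (mmult (adjoint A) B))"

lemma hs_inner_eq_sum: "hs_inner A B = (\<Sum>x\<in>UNIV. \<Sum>y\<in>UNIV. Re (cnj (A x y) * B x y))"
  unfolding hs_inner_def mtrace_def mmult_def adjoint_def by (subst sum.swap) simp

lemma hs_norm_sq_eq_hs_inner: "hs_norm_sq A = hs_inner A A"
  by (simp add: hs_norm_sq_def hs_inner_def)

lemma hs_norm_sq_eq_sum: "hs_norm_sq A = (\<Sum>x\<in>UNIV. \<Sum>y\<in>UNIV. (cmod ((A::'i::finite cmat) x y))\<^sup>2)"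
  by (simp add: hs_norm_sq_eq_hs_inner hs_inner_eq_sum cnj_mult_self)

lemma hs_norm_sq_nonneg: "0 \<le> hs_norm_sq (A::'i::finite cmat)"
  by (simp add: hs_norm_sq_eq_sum sum_nonneg)

lemma hs_inner_commute: "hs_inner A B = hs_inner B (A::'i::finite cmat)"
  unfolding hs_inner_eq_sum by (intro sum.cong refl) (simp add: algebra_simps)

lemma hs_inner_lincomb_right:
  "hs_inner A (\<lambda>i j. of_real \<alpha> * B i j + of_real \<beta> * C i j) =
     \<alpha> * hs_inner A B + \<beta> * hs_inner A (C::'i::finite cmat)"
  by (simp add: hs_inner_eq_sum distrib_left sum.distrib sum_distrib_left mult_ac)

lemma hs_inner_lincomb_left:
  "hs_inner (\<lambda>i j. of_real \<alpha> * A i j + of_real \<beta> * B i j) C =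
     \<alpha> * hs_inner A C + \<beta> * hs_inner B (C::'i::finite cmat)"
  by (simp add: hs_inner_commute[of _ C] hs_inner_lincomb_right)

lemma hs_inner_diff_left:
  "hs_inner (\<lambda>i j. A i j - B i j) C = hs_inner A C - hs_inner B (C::'i::finite cmat)"
  by (simp add: hs_inner_eq_sum left_diff_distrib sum_subtractf)

lemma hs_norm_sq_lincomb:
  "hs_norm_sq (\<lambda>i j. of_real \<alpha> * A i j + of_real \<beta> * B i j) =
     \<alpha>\<^sup>2 * hs_norm_sq A + 2 * \<alpha> * \<beta> * hs_inner A B +
     \<beta>\<^sup>2 * hs_norm_sq (B::'i::finite cmat)"
proof -
  have "hs_inner B A = hs_inner A B" by (rule hs_inner_commute)
  then show ?thesis
    by (simp add: hs_norm_sq_eq_hs_inner hs_inner_lincomb_left hs_inner_lincomb_right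
        power2_eq_square algebra_simps)
qed

lemma hs_inner_id_mat_right: "hs_inner A id_mat = Re (mtrace (A::'i::finite cmat))"
  by (simp add: hs_inner_eq_sum id_mat_def mtrace_def if_distrib[of Re] if_distrib[of "\<lambda>z. _ * z"]
      cong: if_cong)

lemma hs_norm_sq_id_mat: "hs_norm_sq (id_mat::'i::finite cmat) = real CARD('i)"
  unfolding hs_norm_sq_eq_hs_inner hs_inner_id_mat_right by (simp add: mtrace_def id_mat_def)

lemma hs_inner_outer_right: "hs_inner A (outer \<phi>) = Re (cinner \<phi> (mvmult A (\<phi>::'i::finite cvec)))"
proof -
  have "hs_inner A (outer \<phi>) = Re (\<Sum>x\<in>UNIV. \<Sum>y\<in>UNIV. cnj (A x y) * outer \<phi> x y)"
    by (simp only: hs_inner_eq_sum Re_sum)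
  also have "(\<Sum>x\<in>UNIV. \<Sum>y\<in>UNIV. cnj (A x y) * outer \<phi> x y) = cnj (cinner \<phi> (mvmult A \<phi>))"
    by (simp add: outer_def cinner_def mvmult_def sum_distrib_left mult_ac)
  finally show ?thesis by simp
qed

lemma hs_inner_square_le: "(hs_inner A B)\<^sup>2 \<le> hs_norm_sq A * hs_norm_sq (B::'i::finite cmat)"
proof -
  have quadratic: "0 \<le> hs_norm_sq A + 2 * t * hs_inner A B + t\<^sup>2 * hs_norm_sq B" for t
    using hs_norm_sq_nonneg[of "\<lambda>i j. of_real 1 * A i j + of_real t * B i j"]
    by (simp only: hs_norm_sq_lincomb) simp
  show ?thesis
  proof (cases "hs_norm_sq B = 0")
    case True
    have "hs_inner A B = 0"
    proof (rule nonneg_affine_slope_zero)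
      show "0 \<le> 2 * t * hs_inner A B + hs_norm_sq A" for t
        using quadratic[of t] True by simp
    qed
    then show ?thesis using True by simp
  next
    case False
    then have B: "0 < hs_norm_sq B" using hs_norm_sq_nonneg[of B] by simp
    have "0 \<le> hs_norm_sq A - (hs_inner A B)\<^sup>2 / hs_norm_sq B"
      using quadratic[of "- hs_inner A B / hs_norm_sq B"] B
      by (simp add: power2_eq_square field_simps)
    then show ?thesis using B by (simp add: field_simps)
  qed
qed

lemma hs_norm_sq_le_one_if_state:
  assumes "is_state (\<sigma>::'i::finite cmat)"
  shows "hs_norm_sq \<sigma> \<le> 1"
proof -
  have pos: "positive_op \<sigma>" and tr: "(\<Sum>x\<in>UNIV. Re (\<sigma> x x)) = 1"
    using assms by (auto simp: is_state_def mtrace_def simp flip: Re_sum)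
  have "hs_norm_sq \<sigma> \<le> (\<Sum>x\<in>UNIV. \<Sum>y\<in>UNIV. Re (\<sigma> x x) * Re (\<sigma> y y))"
    unfolding hs_norm_sq_eq_sum by (intro sum_mono positive_op_entry_bound[OF pos])
  also have "\<dots> = 1" by (simp add: sum_product[symmetric] tr)
  finally show ?thesis .
qed

lemma E_HS_le:
  assumes "disentangled \<rho>"
  shows "E_HS \<sigma> \<le> hs_norm_sq (\<lambda>i j. \<rho> i j - \<sigma> i j)"
  unfolding E_HS_def
proof (rule cInf_lower)
  show "bdd_below {hs_norm_sq (\<lambda>i j. \<rho> i j - \<sigma> i j) |\<rho>. disentangled \<rho>}"
    by (rule bdd_belowI[of _ 0]) (auto simp: hs_norm_sq_nonneg)
qed (use assms in blast)

lemma E_HS_ge: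
  assumes "\<And>\<rho>. disentangled \<rho> \<Longrightarrow> m \<le> hs_norm_sq (\<lambda>i j. \<rho> i j - \<sigma> i j)"
    and "disentangled \<rho>\<^sub>0"
  shows "m \<le> E_HS \<sigma>"
  unfolding E_HS_def by (rule cInf_greatest) (use assms in auto)

lemma E_HS_le_one_third:
  assumes "is_state (\<sigma>::(bool \<times> bool) cmat)"
  shows "E_HS \<sigma> \<le> 1/3"
proof -
  have tr: "Re (mtrace \<sigma>) = 1" using assms by (simp add: is_state_def)
  have diff: "(\<lambda>i j. (\<sigma> i j / 3 + id_mat i j / 6) - \<sigma> i j) =
      (\<lambda>i j. of_real (- 2/3) * \<sigma> i j + of_real (1/6) * id_mat i j)"
    by (simp add: fun_eq_iff field_simps)
  have "hs_norm_sq (\<lambda>i j. (\<sigma> i j / 3 + id_mat i j / 6) - \<sigma> i j) = 4/9 * hs_norm_sq \<sigma> - 1/9"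
    unfolding diff hs_norm_sq_lincomb hs_inner_id_mat_right hs_norm_sq_id_mat tr
    by (simp add: power2_eq_square)
  also have "\<dots> \<le> 1/3" using hs_norm_sq_le_one_if_state[OF assms] by simp
  finally show ?thesis
    using E_HS_le[OF disentangled_state_mixture[OF assms], of \<sigma>] by simp
qed

section \<open>Distance to the Bell states\<close>

lemma mvmult_outer: "mvmult (outer \<phi>) x = (\<lambda>i. \<phi> i * cinner \<phi> (x::'i::finite cvec))"
  by (simp add: fun_eq_iff mvmult_def outer_def cinner_def sum_distrib_left mult_ac)

(* W = outer phi - 1/n is an entanglement witness; Cauchy-Schwarz against W bounds the distance. *)
lemma hs_dist_to_pure_state_ge:
  fixes \<rho> :: "'i::finite cmat"
  assumes \<phi>: "cinner \<phi> \<phi> = 1" and tr: "mtrace \<rho> = 1"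
    and overlap: "Re (cinner \<phi> (mvmult \<rho> \<phi>)) \<le> f" and "f \<le> 1" and card: "2 \<le> CARD('i)"
  shows "(1 - f)\<^sup>2 * CARD('i) / (real CARD('i) - 1) \<le> hs_norm_sq (\<lambda>i j. \<rho> i j - outer \<phi> i j)"
proof -
  define n where "n = real CARD('i)"
  define W where "W = (\<lambda>i j. of_real 1 * outer \<phi> i j + of_real (- 1 / n) * (id_mat::'i cmat) i j)"
  define X where "X = (\<lambda>i j. \<rho> i j - outer \<phi> i j)"
  have n: "2 \<le> n" using card by (simp add: n_def)
  have PP: "hs_inner (outer \<phi>) (outer \<phi>) = 1"
    unfolding hs_inner_outer_right mvmult_outer \<phi> using \<phi> by simp
  have PI: "hs_inner (outer \<phi>) id_mat = 1" and \<rho>I: "hs_inner \<rho> id_mat = 1"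
    using \<phi> tr by (simp_all add: hs_inner_id_mat_right mtrace_def outer_def cinner_def mult.commute)
  have "hs_norm_sq W = 1 - 1 / n"
    unfolding W_def hs_norm_sq_lincomb hs_norm_sq_id_mat
    using n by (simp add: hs_norm_sq_eq_hs_inner PP PI n_def[symmetric] power2_eq_square field_simps)
  moreover have XW: "hs_inner X W = Re (cinner \<phi> (mvmult \<rho> \<phi>)) - 1"
    unfolding X_def W_def hs_inner_diff_left hs_inner_lincomb_right
    by (simp add: PP PI \<rho>I hs_inner_outer_right mvmult_outer \<phi>)
  moreover have "(1 - f)\<^sup>2 \<le> (hs_inner X W)\<^sup>2"
  proof -
    have "(1 - f)\<^sup>2 \<le> (1 - Re (cinner \<phi> (mvmult \<rho> \<phi>)))\<^sup>2"
      by (rule power_mono) (use overlap \<open>f \<le> 1\<close> in simp_all)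
    then show ?thesis by (simp add: XW power2_commute)
  qed
  ultimately have "(1 - f)\<^sup>2 \<le> hs_norm_sq X * (1 - 1 / n)"
    using hs_inner_square_le[of X W] by simp
  then show ?thesis using n by (simp add: X_def n_def[symmetric] field_simps)
qed

lemma of_real_sqrt2_squared: "complex_of_real (sqrt 2) * complex_of_real (sqrt 2) = 2"
  by (simp flip: of_real_mult)

lemma cinner_psi1_kron:
  "cinner psi1 (mvmult (kron A B) psi1) = (\<Sum>i\<in>UNIV. \<Sum>j\<in>UNIV. A i j * B i j) / 2"
  by (simp add: cinner_def mvmult_def psi1_def kron_def sum_UNIV_prod sum_UNIV_bool algebra_simps
      of_real_sqrt2_squared)

lemma psi1_overlap_product_state_le:
  assumes "is_state (s1::bool cmat)" and "is_state s2"
  shows "Re (cinner psi1 (mvmult (kron s1 s2) psi1)) \<le> 1/2"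
proof -
  define s1' where "s1' = (\<lambda>i j. cnj (s1 i j))"
  have "(hs_inner s1' s2)\<^sup>2 \<le> hs_norm_sq s1' * hs_norm_sq s2"
    by (rule hs_inner_square_le)
  also have "hs_norm_sq s1' = hs_norm_sq s1" by (simp add: s1'_def hs_norm_sq_eq_sum)
  also have "hs_norm_sq s1 * hs_norm_sq s2 \<le> 1 * 1"
    using hs_norm_sq_le_one_if_state[OF assms(1)] hs_norm_sq_le_one_if_state[OF assms(2)]
    by (intro mult_mono hs_norm_sq_nonneg) simp_all
  finally have "(hs_inner s1' s2)\<^sup>2 \<le> 1" by simp
  then have "hs_inner s1' s2 \<le> 1" using power2_le_imp_le[of "hs_inner s1' s2" 1] by simp
  moreover have "Re (cinner psi1 (mvmult (kron s1 s2) psi1)) = hs_inner s1' s2 / 2"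
    by (simp add: cinner_psi1_kron hs_inner_eq_sum s1'_def)
  ultimately show ?thesis by simp
qed

lemma cinner_psi1_self: "cinner psi1 psi1 = 1"
  by (simp add: cinner_def psi1_def sum_UNIV_prod sum_UNIV_bool of_real_sqrt2_squared)

lemma cinner_unitary_conj:
  "cinner (mvmult W x) (mvmult K (mvmult W y)) =
     cinner x (mvmult (mmult (adjoint W) (mmult K W)) (y::'i::finite cvec))"
  by (simp add: cinner_mvmult_left mvmult_mmult)

lemma cinner_bell_vector_self:
  assumes "unitary U" and "unitary V"
  shows "cinner (mvmult (kron U V) psi1) (mvmult (kron U V) psi1) = 1"
proof -
  have "mmult (adjoint (kron U V)) (mmult id_mat (kron U V)) = id_mat"
    using assms by (simp add: adjoint_kron mmult_kron unitary_def kron_id_mat mmult_assoc[symmetric]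
        mmult_id_mat_right)
  then show ?thesis
    using cinner_unitary_conj[of "kron U V" psi1 id_mat psi1]
    by (simp add: mvmult_id_mat cinner_psi1_self)
qed

lemma cinner_mvmult_sum:
  "cinner x (mvmult (\<lambda>i j. \<Sum>k\<in>S. c k * M k i j) y) =
     (\<Sum>k\<in>S. c k * cinner x (mvmult (M k) (y::'i::finite cvec)))"
  unfolding cinner_def mvmult_def
  by (simp add: sum_distrib_left sum_distrib_right mult_ac sum.swap[of _ S])

lemma bell_overlap_disentangled_le:
  assumes "unitary U" and "unitary V" and "disentangled \<rho>"
  shows "Re (cinner (mvmult (kron U V) psi1) (mvmult \<rho> (mvmult (kron U V) psi1))) \<le> 1/2"
proof -
  obtain n :: nat and p r1 r2 where h: "\<forall>k<n. 0 \<le> p k \<and> is_state (r1 k) \<and> is_state (r2 k)"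
    and p: "(\<Sum>k<n. p k) = 1"
    and \<rho>: "\<rho> = (\<lambda>x y. \<Sum>k<n. complex_of_real (p k) * kron (r1 k) (r2 k) x y)"
    using assms(3) unfolding disentangled_def by (elim conjE exE) (rule that, assumption+)
  define \<phi> where "\<phi> = mvmult (kron U V) psi1"
  have "Re (cinner \<phi> (mvmult (kron (r1 k) (r2 k)) \<phi>)) \<le> 1/2" if "k < n" for k
  proof -
    have "mmult (adjoint (kron U V)) (mmult (kron (r1 k) (r2 k)) (kron U V)) =
        kron (mmult (adjoint U) (mmult (r1 k) U)) (mmult (adjoint V) (mmult (r2 k) V))"
      by (simp add: adjoint_kron mmult_kron)
    then show ?thesis
      using psi1_overlap_product_state_le[OF is_state_unitary_conj[OF assms(1)]
          is_state_unitary_conj[OF assms(2)]] h that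
      by (simp add: \<phi>_def cinner_unitary_conj)
  qed
  then have "(\<Sum>k<n. p k * Re (cinner \<phi> (mvmult (kron (r1 k) (r2 k)) \<phi>))) \<le> (\<Sum>k<n. p k * (1/2))"
    using h by (intro sum_mono mult_left_mono) auto
  also have "\<dots> = 1/2" using p by (simp flip: sum_divide_distrib)
  finally show ?thesis by (simp add: \<phi>_def[symmetric] \<rho> cinner_mvmult_sum)
qed

lemma hs_dist_bell_proj_ge:
  assumes "unitary U" and "unitary V" and "disentangled \<rho>"
  shows "1/3 \<le> hs_norm_sq (\<lambda>i j. \<rho> i j - bell_proj U V i j)"
proof -
  define \<phi> where "\<phi> = mvmult (kron U V) psi1"
  have \<phi>: "cinner \<phi> \<phi> = 1" unfolding \<phi>_def by (rule cinner_bell_vector_self[OF assms(1,2)])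
  have "bell_proj U V = outer \<phi>"
    by (simp add: bell_proj_def proj_line_def outer_def \<phi>_def[symmetric] \<phi>)
  moreover have "mtrace \<rho> = 1" using assms(3) by (simp add: disentangled_def is_state_def)
  ultimately show ?thesis
    using hs_dist_to_pure_state_ge[OF \<phi>, of \<rho> "1/2"] bell_overlap_disentangled_le[OF assms]
    by (simp add: \<phi>_def power2_eq_square)
qed

theorem corollary1:
  fixes U V :: "bool cmat"
  assumes "unitary U" and "unitary V"
  shows "E_HS (bell_proj U V) = 1/3 \<and>
         (\<forall>\<sigma> :: (bool \<times> bool) cmat. is_state \<sigma> \<longrightarrow> E_HS \<sigma> \<le> 1/3)"
proof
  have "is_state (bell_proj U V)"
    unfolding bell_proj_def using cinner_bell_vector_self[OF assms]
    by (intro is_state_proj_line) (auto simp: cinner_def)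
  then have "disentangled (\<lambda>x y. bell_proj U V x y / 3 + id_mat x y / 6)"
    by (rule disentangled_state_mixture)
  then have "1/3 \<le> E_HS (bell_proj U V)"
    using hs_dist_bell_proj_ge[OF assms] by (rule E_HS_ge[rotated])
  moreover have "E_HS (bell_proj U V) \<le> 1/3"
    by (rule E_HS_le_one_third) fact
  ultimately show "E_HS (bell_proj U V) = 1/3" by simp
  show "\<forall>\<sigma> :: (bool \<times> bool) cmat. is_state \<sigma> \<longrightarrow> E_HS \<sigma> \<le> 1/3"
    using E_HS_le_one_third by blast
qed

end
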